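(* Let $T$ and $T_{ij}$ ($1\le i\le s$, $1\le j\le r_i$) be quasiperiodic trigonometric polynomials on $\mathbb R^n$, and let $V=\bigcup_{i=1}^s\bigcap_{j=1}^{r_i}V_{ij}$ where each $V_{ij}$ is either $\{x:T_{ij}(x)=0\}$ or $\{x:T_{ij}(x)>0\}$. Let $A_1,\dots,A_N\in\mathbb R^n$ be free generators of the subgroup $\mathcal A$ of $(\mathbb R^n,+)$ generated by all frequencies of $T$ and of the $T_{ij}$ (so $\mathcal A=(A_1)\oplus\dots\oplus(A_N)$), and let $\Phi(x)=(A_1x,\dots,A_Nx)$. If $\Phi:\mathbb R^n\to\mathbb R^N$ is not injective (i.e. the orbit $\{\Phi(x)\bmod\mathbb Z^N\}$ has dimension less than $n$), then $V$ has no isolated points, and for every bounded $\Omega\subset\mathbb R^n$ with nonzero volume the mean value $M_\Omega$ of $T$ over the isolated points of $V$ is equal to zero.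
   Context: A quasiperiodic trigonometric polynomial is a function $T(x)=\sum_{k=1}^p c_k\cos 2\pi\alpha_kx+d_k\sin2\pi\alpha_kx$ with $c_k,d_k\in\mathbb R$ and frequencies $\alpha_k\in\mathbb R^n$ ($\alpha_kx$ the standard scalar product). For $\lambda>0$, $S_\Omega(\lambda)$ is the sum of the values of $T$ at the isolated points of $V$ lying in $\lambda\Omega$, and $M_\Omega=\lim_{\lambda\to\infty}S_\Omega(\lambda)/\operatorname{Vol}(\lambda\Omega)$. *)

theory Defs
  imports "HOL-Analysis.Analysis"
begin

definition qtrig :: "nat \<Rightarrow> (nat \<Rightarrow> real) \<Rightarrow> (nat \<Rightarrow> real) \<Rightarrow> (nat \<Rightarrow> real^'n) \<Rightarrow> real^'n \<Rightarrow> real"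
  where "qtrig p c d \<alpha> x =
    (\<Sum>k<p. c k * cos (2 * pi * (\<alpha> k \<bullet> x)) + d k * sin (2 * pi * (\<alpha> k \<bullet> x)))"

definition int_span :: "'a::real_vector set \<Rightarrow> 'a set"
  where "int_span S = {(\<Sum>v\<in>F. of_int (k v) *\<^sub>R v) | F k. finite F \<and> F \<subseteq> S}"

definition free_generators :: "nat \<Rightarrow> (nat \<Rightarrow> 'a::real_vector) \<Rightarrow> 'a set \<Rightarrow> bool"
  where "free_generators N A G \<longleftrightarrow>
     int_span (A ` {..<N}) = G \<and>
     (\<forall>k::nat \<Rightarrow> int. (\<Sum>i<N. of_int (k i) *\<^sub>R A i) = 0 \<longrightarrow> (\<forall>i<N. k i = 0))"

definition Phi :: "nat \<Rightarrow> (nat \<Rightarrow> real^'n) \<Rightarrow> real^'n \<Rightarrow> real list"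
  where "Phi N A x = map (\<lambda>k. A k \<bullet> x) [0..<N]"

definition isolated_points :: "'a::topological_space set \<Rightarrow> 'a set"
  where "isolated_points V = {x. x isolated_in V}"

definition S_Omega :: "('a::real_normed_vector \<Rightarrow> real) \<Rightarrow> 'a set \<Rightarrow> 'a set \<Rightarrow> real \<Rightarrow> real"
  where "S_Omega T V \<Omega> t = (\<Sum>x \<in> isolated_points V \<inter> ((\<lambda>y. t *\<^sub>R y) ` \<Omega>). T x)"

end

theory Submission
  imports Defs
begin

(* If Phi x = Phi y with x \<noteq> y, then w = y - x is orthogonal to every A_k, hence to every
   integer combination of them, i.e. to all frequencies. Every T_ij is then constant along the
   lines z + t w, so V is a union of such lines and has no isolated points; S_Omega is an empty
   sum and the mean value vanishes. *)

lemma int_span_base: "v \<in> S \<Longrightarrow> v \<in> int_span S"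
  unfolding int_span_def by (rule CollectI, rule exI[of _ "{v}"], rule exI[of _ "\<lambda>_. 1"]) simp

lemma int_span_orthogonal:
  fixes w :: "'a::real_inner"
  assumes "f \<in> int_span S" "\<And>v. v \<in> S \<Longrightarrow> v \<bullet> w = 0"
  shows "f \<bullet> w = 0"
proof -
  from assms(1) obtain F k where f: "f = (\<Sum>v\<in>F. of_int (k v) *\<^sub>R v)" "F \<subseteq> S"
    unfolding int_span_def by blast
  have "f \<bullet> w = (\<Sum>v\<in>F. of_int (k v) * (v \<bullet> w))"
    unfolding f(1) by (simp add: inner_sum_left)
  also have "\<dots> = 0"
    using f(2) assms(2) by (intro sum.neutral) auto
  finally show ?thesis .
qed

lemma Phi_eq_imp_orthogonal:
  assumes "Phi N A x = Phi N A y" "k < N"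
  shows "A k \<bullet> (y - x) = 0"
proof -
  have "\<forall>i\<in>{0..<N}. A i \<bullet> x = A i \<bullet> y"
    using assms(1) unfolding Phi_def by simp
  then show ?thesis
    using assms(2) by (simp add: inner_diff_right)
qed

lemma qtrig_translate_orthogonal:
  assumes "\<And>k. k < p \<Longrightarrow> \<alpha> k \<bullet> w = 0"
  shows "qtrig p c d \<alpha> (x + t *\<^sub>R w) = qtrig p c d \<alpha> x"
  unfolding qtrig_def using assms by (intro sum.cong) (auto simp: inner_add_right)

lemma isolated_points_line_invariant:
  fixes w :: "'a::real_normed_vector"
  assumes "w \<noteq> 0" and invariant: "\<And>z t. z \<in> V \<Longrightarrow> z + t *\<^sub>R w \<in> V"
  shows "isolated_points V = {}"
proof (rule ccontr)
  assume "isolated_points V \<noteq> {}"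
  then obtain z where "z isolated_in V"
    unfolding isolated_points_def by blast
  then obtain e where "e > 0" and zV: "z \<in> V"
    and isolated: "\<And>u. u \<in> V \<Longrightarrow> dist z u < e \<Longrightarrow> u = z"
    by (metis isolated_inE_dist isolated_inE)
  define t where "t = e / (2 * norm w)"
  have "dist z (z + t *\<^sub>R w) = e / 2"
    using \<open>w \<noteq> 0\<close> \<open>e > 0\<close> by (simp add: dist_norm t_def)
  then have "dist z (z + t *\<^sub>R w) < e"
    using \<open>e > 0\<close> by simp
  then have "z + t *\<^sub>R w = z"
    using isolated invariant[OF zV] by blast
  moreover have "t \<noteq> 0"
    using \<open>w \<noteq> 0\<close> \<open>e > 0\<close> by (simp add: t_def)
  ultimately show False
    using \<open>w \<noteq> 0\<close> by simp
qed

lemma S_Omega_no_isolated_points: "isolated_points V = {} \<Longrightarrow> S_Omega T V \<Omega> t = 0"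
  by (simp add: S_Omega_def)

theorem lemma2:
  fixes p :: nat and c d :: "nat \<Rightarrow> real" and \<alpha> :: "nat \<Rightarrow> real^'n"
    and s :: nat and r :: "nat \<Rightarrow> nat"
    and pT :: "nat \<Rightarrow> nat \<Rightarrow> nat" and cT dT :: "nat \<Rightarrow> nat \<Rightarrow> nat \<Rightarrow> real"
    and \<alpha>T :: "nat \<Rightarrow> nat \<Rightarrow> nat \<Rightarrow> real^'n"
    and is_eq :: "nat \<Rightarrow> nat \<Rightarrow> bool"
    and N :: nat and A :: "nat \<Rightarrow> real^'n"
  defines "T \<equiv> qtrig p c d \<alpha>"
    and "Vij \<equiv> \<lambda>i j. if is_eq i j then {x. qtrig (pT i j) (cT i j) (dT i j) (\<alpha>T i j) x = 0}
                                   else {x. qtrig (pT i j) (cT i j) (dT i j) (\<alpha>T i j) x > 0}"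
  defines "V \<equiv> (\<Union>i<s. \<Inter>j<r i. Vij i j)"
    and "freqs \<equiv> \<alpha> ` {..<p} \<union> (\<Union>i<s. \<Union>j<r i. \<alpha>T i j ` {..<pT i j})"
  assumes free: "free_generators N A (int_span freqs)"
    and not_inj: "\<not> inj (Phi N A)"
  shows "isolated_points V = {} \<and>
         (\<forall>\<Omega> :: (real^'n) set. bounded \<Omega> \<and> \<Omega> \<in> sets lebesgue \<and> emeasure lebesgue \<Omega> \<noteq> 0 \<longrightarrow>
         ((\<lambda>t. S_Omega T V \<Omega> t / measure lebesgue ((\<lambda>y. t *\<^sub>R y) ` \<Omega>)) \<longlongrightarrow> 0) at_top)"
proof -
  from not_inj obtain x y where xy: "Phi N A x = Phi N A y" "x \<noteq> y"
    unfolding inj_def by blast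
  define w where "w = y - x"
  have "w \<noteq> 0"
    using xy(2) by (simp add: w_def)
  have freqs_orthogonal: "f \<bullet> w = 0" if "f \<in> freqs" for f
  proof (rule int_span_orthogonal)
    show "f \<in> int_span (A ` {..<N})"
      using free int_span_base[OF that] by (simp add: free_generators_def)
  qed (use xy(1) Phi_eq_imp_orthogonal in \<open>auto simp: w_def\<close>)
  have Vij_invariant: "z + t *\<^sub>R w \<in> Vij i j" if "z \<in> Vij i j" "i < s" "j < r i" for z t i j
  proof -
    have "qtrig (pT i j) (cT i j) (dT i j) (\<alpha>T i j) (z + t *\<^sub>R w) =
          qtrig (pT i j) (cT i j) (dT i j) (\<alpha>T i j) z"
      using that(2,3) by (intro qtrig_translate_orthogonal freqs_orthogonal) (auto simp: freqs_def)
    then show ?thesis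
      using that(1) by (simp add: Vij_def split: if_splits)
  qed
  have "isolated_points V = {}"
    using \<open>w \<noteq> 0\<close> by (rule isolated_points_line_invariant) (force simp: V_def intro: Vij_invariant)
  then show ?thesis
    by (simp add: S_Omega_no_isolated_points)
qed

end
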